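(* Let $0<p\leqslant q:=1-p$, and let $\tilde f(z)$ and $\tilde g(z)$ be entire functions satisfying \[ \tilde{f}(z)=(1-e^{-pz})\tilde{f}(pz) +e^{-pz}\tilde{f}(qz) +\tilde{g}(z), \] with $\tilde f(0)=\tilde g(0)=0$. Then $\tilde f$ is JS-admissible if and only if $\tilde g$ is JS-admissible.
   Context: An entire function $\tilde f$ is called JS-admissible if the following two conditions hold for $|z|\geqslant1$ (for some small $\varepsilon>0$ and some $\varepsilon'\in(0,1)$): (I) there exist $\alpha,\beta\in\mathbb{R}$ such that, uniformly for $|\arg(z)|\leqslant\varepsilon$, $\tilde f(z)=O\left(|z|^\alpha(\log_+|z|)^\beta\right)$, where $\log_+x:=\log(1+x)$; (O) uniformly for $\varepsilon\leqslant|\arg(z)|\leqslant\pi$, $e^z\tilde f(z)=O\left(e^{(1-\varepsilon')|z|}\right)$. *)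

theory Defs
  imports "HOL-Complex_Analysis.Complex_Analysis"
begin

definition log_plus :: "real \<Rightarrow> real" where
  "log_plus x = ln (1 + x)"

definition JS_admissible :: "(complex \<Rightarrow> complex) \<Rightarrow> bool" where
  "JS_admissible f \<longleftrightarrow> f holomorphic_on UNIV \<and>
     (\<exists>\<epsilon>>0. \<exists>\<epsilon>'. 0 < \<epsilon>' \<and> \<epsilon>' < 1 \<and>
       (\<exists>\<alpha> \<beta> :: real. \<exists>C1. \<forall>z. norm z \<ge> 1 \<and> \<bar>Arg z\<bar> \<le> \<epsilon> \<longrightarrow>
            norm (f z) \<le> C1 * norm z powr \<alpha> * log_plus (norm z) powr \<beta>) \<and>
       (\<exists>C2. \<forall>z. norm z \<ge> 1 \<and> \<epsilon> \<le> \<bar>Arg z\<bar> \<and> \<bar>Arg z\<bar> \<le> pi \<longrightarrow>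
            norm (exp z * f z) \<le> C2 * exp ((1 - \<epsilon>') * norm z)))"

end

theory Submission
  imports Defs
begin

text \<open>Write \<open>F z = exp z * f z\<close>. If \<open>f\<close> is admissible then so is \<open>g\<close>: the equation expresses
  \<open>g z\<close> through \<open>f\<close> at \<open>z\<close>, \<open>p z\<close>, \<open>q z\<close> with coefficients of modulus at most 2 when
  \<open>Re z \<ge> 0\<close>, and \<open>exp z * g z\<close> through \<open>F\<close> at the same points with coefficients \<open>exp (q z)\<close>
  and \<open>exp ((q - p) z)\<close>, which only lowers the decay rate in (O) from \<open>d\<close> to \<open>d p\<close>.
  Conversely, the equation is a recursion for \<open>f z\<close> in terms of \<open>f\<close> at the shorter points
  \<open>p z\<close> and \<open>q z\<close>, so a bound that holds on a disc propagates to the whole plane by induction on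
  \<open>|z|\<close>. In a sector \<open>|Arg z| \<le> e < pi/2\<close> the coefficient \<open>exp (- p z)\<close> is small for large
  \<open>|z|\<close>, so a polynomial weight \<open>(1 + |z|)^n\<close> of large degree reproduces itself; outside the
  sector \<open>|exp (q z)| \<le> exp (q |z| cos e)\<close>, and the weight \<open>exp ((1 - \<delta>) |z|)\<close> reproduces
  itself once \<open>\<delta> \<le> (1 - cos e) / 2\<close>.\<close>

lemma norm_mult_cos_le_Re:
  assumes "\<bar>Arg z\<bar> \<le> e" "e \<le> pi"
  shows "norm z * cos e \<le> Re z"
proof (cases "z = 0")
  case False
  have "cos e \<le> cos \<bar>Arg z\<bar>" by (rule cos_monotone_0_pi_le) (use assms in auto)
  also have "cos \<bar>Arg z\<bar> = Re z / norm z" using cos_Arg[OF False] by (simp add: abs_if)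
  finally show ?thesis using False by (simp add: field_simps mult.commute)
qed simp

lemma Re_le_norm_mult_cos:
  assumes "e \<le> \<bar>Arg z\<bar>" "0 \<le> e"
  shows "Re z \<le> norm z * cos e"
proof (cases "z = 0")
  case False
  have "\<bar>Arg z\<bar> \<le> pi" using Arg_bounded[of z] by auto
  then have "cos \<bar>Arg z\<bar> \<le> cos e" by (intro cos_monotone_0_pi_le) (use assms in auto)
  also have "cos \<bar>Arg z\<bar> = Re z / norm z" using cos_Arg[OF False] by (simp add: abs_if)
  finally show ?thesis using False by (simp add: field_simps mult.commute)
qed simp

lemma one_plus_powr_le_exp:
  fixes \<gamma> d :: real
  assumes "0 \<le> \<gamma>" "0 < d"
  obtains M where "M > 0" "\<And>x. 0 \<le> x \<Longrightarrow> (1 + x) powr \<gamma> \<le> M * exp (d * x)"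
proof (cases "\<gamma> = 0")
  case True
  then show ?thesis using assms by (intro that[of 1]) auto
next
  case False
  with assms have \<gamma>: "\<gamma> > 0" by auto
  define a where "a = d / \<gamma>"
  have a: "a > 0" using \<gamma> assms by (simp add: a_def)
  show ?thesis
  proof (rule that[of "exp (d - \<gamma> - \<gamma> * ln a)"])
    fix x :: real assume x: "0 \<le> x"
    have "ln (a * (1 + x)) \<le> a * (1 + x) - 1" using a x by (intro ln_le_minus_one) auto
    then have "\<gamma> * ln (1 + x) \<le> \<gamma> * (a * (1 + x) - 1 - ln a)"
      using a x \<gamma> by (intro mult_left_mono) (auto simp: ln_mult)
    also have "\<dots> = d * x + (d - \<gamma> - \<gamma> * ln a)" using \<gamma> by (simp add: a_def field_simps)
    finally show "(1 + x) powr \<gamma> \<le> exp (d - \<gamma> - \<gamma> * ln a) * exp (d * x)"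
      using x by (simp add: powr_def mult.commute flip: exp_add)
  qed simp
qed

lemma continuous_on_cball_bounded:
  fixes h :: "'a::{real_normed_vector,heine_borel} \<Rightarrow> 'b::real_normed_vector"
  assumes "continuous_on (cball 0 R) h"
  obtains B where "B \<ge> 0" "\<And>z. norm z \<le> R \<Longrightarrow> norm (h z) \<le> B"
proof -
  have "compact (h ` cball 0 R)" by (rule compact_continuous_image) (use assms in auto)
  then obtain B where "B > 0" "\<forall>y\<in>h ` cball 0 R. norm y \<le> B"
    using compact_imp_bounded bounded_pos by metis
  then show ?thesis by (intro that[of B]) auto
qed

lemma powr_mult_log_plus_powr_le:
  fixes x a b :: real
  assumes "1 \<le> x"
  shows "x powr a * log_plus x powr b \<le> (ln 2 powr b + 1) * (1 + x) powr (\<bar>a\<bar> + \<bar>b\<bar>)"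
proof -
  have "x powr a \<le> x powr \<bar>a\<bar>" using assms by (intro powr_mono) auto
  also have "\<dots> \<le> (1 + x) powr \<bar>a\<bar>" using assms by (intro powr_mono2) auto
  finally have a: "x powr a \<le> (1 + x) powr \<bar>a\<bar>" .
  have log: "ln 2 \<le> log_plus x" "log_plus x \<le> 1 + x"
    using assms by (auto simp: log_plus_def intro: order.trans[OF ln_le_minus_one])
  have b: "log_plus x powr b \<le> (ln 2 powr b + 1) * (1 + x) powr \<bar>b\<bar>"
  proof (cases "b \<ge> 0")
    case True
    have "log_plus x powr b \<le> (1 + x) powr b"
      using log True assms by (intro powr_mono2) (auto simp: log_plus_def)
    also have "\<dots> = (1 + x) powr \<bar>b\<bar>" using True by simp
    also have "\<dots> \<le> (ln 2 powr b + 1) * (1 + x) powr \<bar>b\<bar>" by (simp add: distrib_right)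
    finally show ?thesis .
  next
    case False
    have "log_plus x powr b \<le> ln 2 powr b" using log False by (intro powr_mono2') auto
    also have "\<dots> \<le> (ln 2 powr b + 1) * (1 + x) powr \<bar>b\<bar>"
      using assms by (smt (verit) ge_one_powr_ge_zero mult_le_cancel_left1 powr_ge_zero)
    finally show ?thesis .
  qed
  have "x powr a * log_plus x powr b \<le> (1 + x) powr \<bar>a\<bar> * ((ln 2 powr b + 1) * (1 + x) powr \<bar>b\<bar>)"
    using a b by (intro mult_mono) auto
  then show ?thesis by (simp add: powr_add mult.left_commute)
qed

lemma power_one_plus_mult_le:
  fixes q x :: real
  assumes "0 \<le> q" "q \<le> 1" "1 \<le> x"
  shows "(1 + q * x) ^ n \<le> ((1 + q) / 2) ^ n * (1 + x) ^ n"
proof -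
  have "(1 - q) * 1 \<le> (1 - q) * x" using assms by (intro mult_left_mono) auto
  then have "1 + q * x \<le> (1 + q) / 2 * (1 + x)" by (simp add: field_simps)
  then show ?thesis using assms by (simp add: power_mono flip: power_mult_distrib)
qed

lemma power_le_with_large_exponent:
  fixes r \<epsilon> \<gamma> :: real
  assumes "0 \<le> r" "r < 1" "0 < \<epsilon>"
  obtains n where "r ^ n \<le> \<epsilon>" "\<gamma> \<le> real n"
proof -
  obtain n0 where "r ^ n0 < \<epsilon>" using real_arch_pow_inv[of \<epsilon> r] assms by (cases "r = 0") auto
  moreover have "r ^ (n0 + nat \<lceil>\<gamma>\<rceil>) \<le> r ^ n0" using assms by (intro power_decreasing) auto
  ultimately show ?thesis using of_nat_ceiling[of \<gamma>] by (intro that[of "n0 + nat \<lceil>\<gamma>\<rceil>"]) auto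
qed

lemma norm_exp_diff_le:
  fixes z :: complex
  assumes "0 \<le> p" "p \<le> q" "Re z \<le> y" "0 \<le> y"
  shows "norm (exp (of_real q * z) - exp (of_real (q - p) * z)) \<le> 2 * exp (q * y)"
proof -
  have "q * Re z \<le> q * y" "(q - p) * Re z \<le> (q - p) * y"
    using assms by (auto intro!: mult_left_mono)
  moreover have "(q - p) * y \<le> q * y" using assms by (simp add: algebra_simps)
  ultimately have "norm (exp (of_real q * z)) \<le> exp (q * y)"
    "norm (exp (of_real (q - p) * z)) \<le> exp (q * y)" by auto
  then show ?thesis
    using norm_triangle_ineq4[of "exp (of_real q * z)" "exp (of_real (q - p) * z)"] by linarith
qed

lemma norm_add3_le:
  fixes a b c :: "'a::real_normed_vector"
  shows "norm (a + b + c) \<le> norm a + norm b + norm c"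
  using norm_triangle_ineq[of "a + b" c] norm_triangle_ineq[of a b] by linarith

lemma norm_diff3_le:
  fixes a b c :: "'a::real_normed_vector"
  shows "norm (a - b - c) \<le> norm a + norm b + norm c"
  using norm_triangle_ineq4[of "a - b" c] norm_triangle_ineq4[of a b] by linarith

lemma dilation_induct:
  fixes S :: "complex set" and P :: "complex \<Rightarrow> bool" and p q R :: real
  assumes "z \<in> S" and pq: "0 < p" "p \<le> q" "q < 1" and "0 < R"
    and closed: "\<And>w. w \<in> S \<Longrightarrow> of_real p * w \<in> S \<and> of_real q * w \<in> S"
    and base: "\<And>w. w \<in> S \<Longrightarrow> norm w \<le> R \<Longrightarrow> P w"
    and step: "\<And>w. w \<in> S \<Longrightarrow> R < norm w \<Longrightarrow> P (of_real p * w) \<Longrightarrow> P (of_real q * w) \<Longrightarrow> P w"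
  shows "P z"
proof -
  have q: "0 < q" using pq by linarith
  have "P w" if "w \<in> S" "norm w \<le> R * (1/q)^n" for n w
    using that
  proof (induction n arbitrary: w)
    case 0
    then show ?case using base by simp
  next
    case (Suc n)
    show ?case
    proof (cases "norm w \<le> R")
      case False
      have "norm (of_real q * w) = q * norm w" using q by (simp add: norm_mult)
      also have "\<dots> \<le> R * (1/q)^n" using Suc.prems(2) q by (simp add: field_simps)
      finally have "norm (of_real q * w) \<le> R * (1/q)^n" .
      moreover have "norm (of_real p * w) \<le> norm (of_real q * w)"
        using pq by (simp add: norm_mult mult_right_mono)
      ultimately show ?thesis
        using step[OF Suc.prems(1)] False Suc.IH closed[OF Suc.prems(1)] by force
    qed (use base Suc.prems in auto)
  qed
  moreover obtain n where "norm z / R < (1/q)^n" using real_arch_pow[of "1/q"] q pq by auto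
  then have "norm z \<le> R * (1/q)^n" using \<open>0 < R\<close> by (simp add: field_simps)
  ultimately show ?thesis using \<open>z \<in> S\<close> by blast
qed

text \<open>Conditions (I) and (O) required for all \<open>z\<close> rather than \<open>|z| \<ge> 1\<close>, with the weight
  \<open>|z|^\<alpha> (log\<^sub>+ |z|)^\<beta>\<close> replaced by \<open>(1 + |z|)^\<gamma>\<close>; for continuous \<open>f\<close> this is equivalent.\<close>

definition JS_inner :: "(complex \<Rightarrow> complex) \<Rightarrow> real \<Rightarrow> real \<Rightarrow> real \<Rightarrow> bool" where
  "JS_inner f e \<gamma> C \<longleftrightarrow> 0 \<le> C \<and> (\<forall>z. \<bar>Arg z\<bar> \<le> e \<longrightarrow> norm (f z) \<le> C * (1 + norm z) powr \<gamma>)"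

definition JS_outer :: "(complex \<Rightarrow> complex) \<Rightarrow> real \<Rightarrow> real \<Rightarrow> real \<Rightarrow> bool" where
  "JS_outer f e d C \<longleftrightarrow>
     0 \<le> C \<and> (\<forall>z. e \<le> \<bar>Arg z\<bar> \<longrightarrow> norm (exp z * f z) \<le> C * exp ((1 - d) * norm z))"

lemma JS_admissibleI:
  assumes "f holomorphic_on UNIV" "0 < e" "0 < d" "d < 1" "0 \<le> \<gamma>"
    and inner: "JS_inner f e \<gamma> C" and outer: "JS_outer f e d C'"
  shows "JS_admissible f"
proof -
  have "norm (f z) \<le> (C * 2 powr \<gamma>) * norm z powr \<gamma> * log_plus (norm z) powr 0"
    if z: "1 \<le> norm z" "\<bar>Arg z\<bar> \<le> e" for z
  proof -
    have "norm (f z) \<le> C * (1 + norm z) powr \<gamma>" using inner z by (simp add: JS_inner_def)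
    also have "\<dots> \<le> C * (2 * norm z) powr \<gamma>"
      using inner z \<open>0 \<le> \<gamma>\<close> by (intro mult_left_mono powr_mono2) (auto simp: JS_inner_def)
    also have "\<dots> = (C * 2 powr \<gamma>) * norm z powr \<gamma>" by (simp add: powr_mult)
    finally have "norm (f z) \<le> (C * 2 powr \<gamma>) * norm z powr \<gamma>" .
    moreover have "0 < log_plus (norm z)" unfolding log_plus_def by (rule ln_gt_zero) (use z in linarith)
    ultimately show ?thesis by simp
  qed
  then show ?thesis
    using assms outer unfolding JS_admissible_def JS_outer_def by blast
qed

lemma JS_inner_of_bound_off_disc:
  assumes "continuous_on UNIV f"
    and "\<And>z. 1 \<le> norm z \<Longrightarrow> \<bar>Arg z\<bar> \<le> e \<Longrightarrow>
           norm (f z) \<le> C1 * norm z powr a * log_plus (norm z) powr b"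
  shows "\<exists>C. JS_inner f e (\<bar>a\<bar> + \<bar>b\<bar>) C"
proof -
  obtain B where B: "0 \<le> B" "\<And>z. norm z \<le> 1 \<Longrightarrow> norm (f z) \<le> B"
    using continuous_on_cball_bounded[of 1 f] continuous_on_subset assms(1) by blast
  define L where "L = ln 2 powr b + 1"
  have L: "0 < L" by (simp add: L_def add_nonneg_pos)
  have "norm (f z) \<le> (\<bar>C1\<bar> * L + B) * (1 + norm z) powr (\<bar>a\<bar> + \<bar>b\<bar>)"
    if "\<bar>Arg z\<bar> \<le> e" for z
  proof (cases "1 \<le> norm z")
    case True
    have "norm (f z) \<le> \<bar>C1\<bar> * (norm z powr a * log_plus (norm z) powr b)"
      using assms(2)[OF True that] abs_ge_self[of C1]
      by (simp add: mult.assoc order.trans[OF _ mult_right_mono])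
    also have "\<dots> \<le> \<bar>C1\<bar> * (L * (1 + norm z) powr (\<bar>a\<bar> + \<bar>b\<bar>))"
      unfolding L_def by (intro mult_left_mono powr_mult_log_plus_powr_le True) auto
    also have "\<dots> \<le> (\<bar>C1\<bar> * L + B) * (1 + norm z) powr (\<bar>a\<bar> + \<bar>b\<bar>)"
      using B by (simp add: algebra_simps)
    finally show ?thesis .
  next
    case False
    have X: "1 \<le> (1 + norm z) powr (\<bar>a\<bar> + \<bar>b\<bar>)" by (intro ge_one_powr_ge_zero) auto
    have "norm (f z) \<le> B" using B False by simp
    also have "\<dots> \<le> B * (1 + norm z) powr (\<bar>a\<bar> + \<bar>b\<bar>)"
      using B X by (simp add: mult_le_cancel_left1)
    also have "\<dots> \<le> (\<bar>C1\<bar> * L + B) * (1 + norm z) powr (\<bar>a\<bar> + \<bar>b\<bar>)"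
      using L X by (intro mult_right_mono) auto
    finally show ?thesis .
  qed
  then show ?thesis using B L unfolding JS_inner_def by (intro exI[of _ "\<bar>C1\<bar> * L + B"]) simp
qed

lemma JS_outer_of_bound_off_disc:
  assumes "continuous_on UNIV f" "d \<le> 1"
    and "\<And>z. 1 \<le> norm z \<Longrightarrow> e \<le> \<bar>Arg z\<bar> \<Longrightarrow> \<bar>Arg z\<bar> \<le> pi \<Longrightarrow>
           norm (exp z * f z) \<le> C2 * exp ((1 - d) * norm z)"
  shows "\<exists>C. JS_outer f e d C"
proof -
  obtain B where B: "0 \<le> B" "\<And>z. norm z \<le> 1 \<Longrightarrow> norm (f z) \<le> B"
    using continuous_on_cball_bounded[of 1 f] continuous_on_subset assms(1) by blast
  have "norm (exp z * f z) \<le> (\<bar>C2\<bar> + exp 1 * B) * exp ((1 - d) * norm z)"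
    if "e \<le> \<bar>Arg z\<bar>" for z
  proof -
    have weight: "1 \<le> exp ((1 - d) * norm z)" using assms(2) by simp
    show ?thesis
    proof (cases "1 \<le> norm z")
      case True
      have "norm (exp z * f z) \<le> C2 * exp ((1 - d) * norm z)"
        using assms(3)[OF True that] Arg_bounded[of z] by auto
      also have "\<dots> \<le> (\<bar>C2\<bar> + exp 1 * B) * exp ((1 - d) * norm z)"
        using B abs_ge_self[of C2] by (intro mult_right_mono add_increasing2) auto
      finally show ?thesis .
    next
      case False
      have "Re z \<le> 1" using False complex_Re_le_cmod[of z] by linarith
      then have "norm (exp z * f z) \<le> exp 1 * B"
        using B False by (auto simp: norm_mult intro!: mult_mono)
      also have "\<dots> \<le> (\<bar>C2\<bar> + exp 1 * B) * 1" using B by simp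
      also have "\<dots> \<le> (\<bar>C2\<bar> + exp 1 * B) * exp ((1 - d) * norm z)"
        using B weight by (intro mult_left_mono) auto
      finally show ?thesis .
    qed
  qed
  then show ?thesis using B unfolding JS_outer_def by (intro exI[of _ "\<bar>C2\<bar> + exp 1 * B"]) simp
qed

text \<open>On the strip between the two sectors \<open>|exp z| \<le> exp (|z| cos e1)\<close>, which beats the
  polynomial bound of (I) by a factor \<open>exp (- (1 - cos e1) |z| / 2)\<close>.\<close>

lemma JS_outer_narrow_sector:
  assumes inner: "JS_inner f e \<gamma> C" and outer: "JS_outer f e d C'"
    and "0 < e1" "e1 \<le> e" "e1 \<le> pi" "0 \<le> \<gamma>"
  shows "\<exists>C''. JS_outer f e1 (min d ((1 - cos e1) / 2)) C''"
proof -
  define d' where "d' = (1 - cos e1) / 2"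
  define d1 where "d1 = min d d'"
  have "cos e1 < cos 0" using assms by (intro cos_monotone_0_pi) auto
  then have "0 < d'" by (simp add: d'_def)
  then obtain M where M: "0 < M" "\<And>x. 0 \<le> x \<Longrightarrow> (1 + x) powr \<gamma> \<le> M * exp (d' * x)"
    using one_plus_powr_le_exp \<open>0 \<le> \<gamma>\<close> by blast
  have C: "0 \<le> C" "0 \<le> C'" using inner outer by (auto simp: JS_inner_def JS_outer_def)
  have "norm (exp z * f z) \<le> (C' + C * M) * exp ((1 - d1) * norm z)" if z: "e1 \<le> \<bar>Arg z\<bar>" for z
  proof (cases "e \<le> \<bar>Arg z\<bar>")
    case True
    then have "norm (exp z * f z) \<le> C' * exp ((1 - d) * norm z)"
      using outer by (auto simp: JS_outer_def)
    also have "\<dots> \<le> (C' + C * M) * exp ((1 - d1) * norm z)"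
      using C M by (intro mult_mono) (auto simp: d1_def intro!: mult_right_mono)
    finally show ?thesis .
  next
    case False
    have "norm (exp z * f z) = exp (Re z) * norm (f z)" by (simp add: norm_mult)
    also have "\<dots> \<le> exp (norm z * cos e1) * (C * (1 + norm z) powr \<gamma>)"
      using False inner Re_le_norm_mult_cos[OF z] \<open>0 < e1\<close>
      by (intro mult_mono) (auto simp: JS_inner_def)
    also have "\<dots> \<le> exp (norm z * cos e1) * (C * (M * exp (d' * norm z)))"
      using M(2)[of "norm z"] C by (intro mult_left_mono) auto
    also have "\<dots> = C * M * exp ((1 - d') * norm z)" by (simp add: d'_def field_simps flip: exp_add)
    also have "\<dots> \<le> (C' + C * M) * exp ((1 - d1) * norm z)"
      using C M by (intro mult_mono) (auto simp: d1_def intro!: mult_right_mono)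
    finally show ?thesis .
  qed
  then show ?thesis using C M unfolding JS_outer_def d'_def[symmetric] d1_def[symmetric]
    by (intro exI[of _ "C' + C * M"]) simp
qed

lemma JS_admissibleE:
  assumes "JS_admissible f"
  obtains e d \<gamma> C C' where "0 < e" "e \<le> 1" "0 < d" "d < 1" "0 \<le> \<gamma>"
    "JS_inner f e \<gamma> C" "JS_outer f e d C'"
proof -
  from assms obtain e d a b C1 C2 where hol: "f holomorphic_on UNIV" and e: "0 < e" "0 < d" "d < 1"
    and I: "\<And>z. 1 \<le> norm z \<Longrightarrow> \<bar>Arg z\<bar> \<le> e \<Longrightarrow>
              norm (f z) \<le> C1 * norm z powr a * log_plus (norm z) powr b"
    and O: "\<And>z. 1 \<le> norm z \<Longrightarrow> e \<le> \<bar>Arg z\<bar> \<Longrightarrow> \<bar>Arg z\<bar> \<le> pi \<Longrightarrow>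
              norm (exp z * f z) \<le> C2 * exp ((1 - d) * norm z)"
    unfolding JS_admissible_def by blast
  have f: "continuous_on UNIV f" using hol holomorphic_on_imp_continuous_on by blast
  obtain C where inner: "JS_inner f e (\<bar>a\<bar> + \<bar>b\<bar>) C" using JS_inner_of_bound_off_disc[OF f I] by blast
  obtain C' where outer: "JS_outer f e d C'" using JS_outer_of_bound_off_disc[OF f _ O] e by force
  define e1 where "e1 = min e 1"
  have e1: "0 < e1" "e1 \<le> e" "e1 \<le> 1" "e1 \<le> pi" using e pi_gt3 by (auto simp: e1_def)
  obtain C'' where outer1: "JS_outer f e1 (min d ((1 - cos e1) / 2)) C''"
    using JS_outer_narrow_sector[OF inner outer e1(1,2,4)] by auto
  have inner1: "JS_inner f e1 (\<bar>a\<bar> + \<bar>b\<bar>) C" using inner e1 by (auto simp: JS_inner_def)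
  have "cos e1 < cos 0" using e1 pi_gt3 by (intro cos_monotone_0_pi) auto
  then show ?thesis using e by (intro that[OF e1(1,3) _ _ _ inner1 outer1]) auto
qed

locale dilation_equation =
  fixes p q :: real and f g :: "complex \<Rightarrow> complex"
  assumes p_pos: "0 < p" and q_eq: "q = 1 - p" and p_le_q: "p \<le> q"
    and equation: "\<And>z. f z = (1 - exp (- of_real p * z)) * f (of_real p * z)
                     + exp (- of_real p * z) * f (of_real q * z) + g z"
begin

lemma q_pos: "0 < q" and q_less_1: "q < 1"
  using p_pos q_eq p_le_q by auto

lemma decay_rates_inhomogeneity:
  assumes "0 \<le> d"
  shows "1 - d \<le> 1 - d * p" and "(1 - d) * q \<le> 1 - d * p" and "q + (1 - d) * p = 1 - d * p"
proof -
  have "d * p \<le> d * 1" "d * p \<le> d * q"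
    using assms p_le_q q_less_1 by (intro mult_left_mono; simp)+
  then show "1 - d \<le> 1 - d * p" "(1 - d) * q \<le> 1 - d * p"
    using q_less_1 by (simp_all add: algebra_simps)
  show "q + (1 - d) * p = 1 - d * p" unfolding q_eq by (simp add: algebra_simps)
qed

lemma decay_rates_solution:
  assumes "0 \<le> c" "c \<le> 1" "\<delta> \<le> (1 - c) / 2"
  shows "q * c + (1 - \<delta>) * p \<le> 1 - \<delta> - p * (1 - c) / 2"
    and "(1 - \<delta>) * q \<le> 1 - \<delta> - p * (1 - c) / 2"
proof -
  have "p * ((1 - c) / 2) \<le> q * ((1 - c) / 2)" using p_le_q assms by (intro mult_right_mono) auto
  also have "\<dots> \<le> q * (1 - \<delta> - c)" using assms q_pos by (intro mult_left_mono) auto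
  finally show "q * c + (1 - \<delta>) * p \<le> 1 - \<delta> - p * (1 - c) / 2"
    unfolding q_eq by (simp add: algebra_simps)
  have "p * ((1 - c) / 2) \<le> p * (1 - \<delta>)" using assms p_pos by (intro mult_left_mono) auto
  then show "(1 - \<delta>) * q \<le> 1 - \<delta> - p * (1 - c) / 2"
    unfolding q_eq by (simp add: algebra_simps)
qed

lemma norm_solution_le:
  "norm (f z) \<le> norm (1 - exp (- of_real p * z)) * norm (f (of_real p * z))
     + norm (exp (- of_real p * z)) * norm (f (of_real q * z)) + norm (g z)"
  using norm_add3_le[of "(1 - exp (- of_real p * z)) * f (of_real p * z)"
      "exp (- of_real p * z) * f (of_real q * z)" "g z"]
  unfolding norm_mult equation[of z] .

lemma exp_mult_equation:
  "exp z * f z = exp z * g z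
     + (exp (of_real q * z) - exp (of_real (q - p) * z)) * (exp (of_real p * z) * f (of_real p * z))
     + exp (of_real q * z) * f (of_real q * z)"
proof -
  define a b where "a = of_real p * z" and "b = of_real q * z"
  have "a + b = of_real (p + q) * z" by (simp add: a_def b_def distrib_right)
  then have z: "z = a + b" using q_eq by simp
  have qp: "of_real (q - p) * z = b - a" by (simp add: a_def b_def left_diff_distrib)
  have eq: "f z = (1 - exp (- a)) * f a + exp (- a) * f b + g z"
    using equation[of z] by (simp add: a_def b_def)
  have ez: "exp z = exp a * exp b" using z by (simp add: exp_add)
  have "exp z * f z = exp a * exp b * ((1 - exp (- a)) * f a + exp (- a) * f b + g z)"
    by (simp only: eq ez)
  also have "\<dots> = exp a * exp b * g z + (exp b - exp b / exp a) * (exp a * f a) + exp b * f b"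
    by (simp add: exp_minus field_simps)
  finally show ?thesis unfolding qp exp_diff ez a_def[symmetric] b_def[symmetric] .
qed

lemma norm_inhomogeneity_le:
  "norm (g z) \<le> norm (f z) + norm (1 - exp (- of_real p * z)) * norm (f (of_real p * z))
     + norm (exp (- of_real p * z)) * norm (f (of_real q * z))"
proof -
  have "f z - (1 - exp (- of_real p * z)) * f (of_real p * z)
      - exp (- of_real p * z) * f (of_real q * z) = g z"
    using equation[of z] by (simp add: algebra_simps)
  then show ?thesis
    using norm_diff3_le[of "f z" "(1 - exp (- of_real p * z)) * f (of_real p * z)"
        "exp (- of_real p * z) * f (of_real q * z)"]
    by (simp only: norm_mult)
qed

lemma norm_exp_mult_solution_le:
  "norm (exp z * f z) \<le> norm (exp z * g z)
     + norm (exp (of_real q * z) - exp (of_real (q - p) * z)) * norm (exp (of_real p * z) * f (of_real p * z))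
     + norm (exp (of_real q * z) * f (of_real q * z))"
  using norm_add3_le[of "exp z * g z"
      "(exp (of_real q * z) - exp (of_real (q - p) * z)) * (exp (of_real p * z) * f (of_real p * z))"
      "exp (of_real q * z) * f (of_real q * z)"]
  unfolding exp_mult_equation[of z, symmetric] norm_mult .

lemma norm_exp_mult_inhomogeneity_le:
  "norm (exp z * g z) \<le> norm (exp z * f z)
     + norm (exp (of_real q * z) - exp (of_real (q - p) * z)) * norm (exp (of_real p * z) * f (of_real p * z))
     + norm (exp (of_real q * z) * f (of_real q * z))"
proof -
  have "exp z * f z
      - (exp (of_real q * z) - exp (of_real (q - p) * z)) * (exp (of_real p * z) * f (of_real p * z))
      - exp (of_real q * z) * f (of_real q * z) = exp z * g z"
    using exp_mult_equation[of z] by (simp add: algebra_simps)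
  then show ?thesis
    using norm_diff3_le[of "exp z * f z"
        "(exp (of_real q * z) - exp (of_real (q - p) * z)) * (exp (of_real p * z) * f (of_real p * z))"
        "exp (of_real q * z) * f (of_real q * z)"]
    by (simp only: norm_mult)
qed
lemma JS_inner_inhomogeneity:
  assumes inner: "JS_inner f e \<gamma> C" and "0 \<le> \<gamma>" "e \<le> pi / 2"
  shows "JS_inner g e \<gamma> (4 * C)"
proof -
  have C: "0 \<le> C" using inner by (simp add: JS_inner_def)
  have "norm (g z) \<le> 4 * C * (1 + norm z) powr \<gamma>" if z: "\<bar>Arg z\<bar> \<le> e" for z
  proof -
    define X where "X = (1 + norm z) powr \<gamma>"
    have "norm z * cos (pi / 2) \<le> Re z" using z assms by (intro norm_mult_cos_le_Re) auto
    then have E: "norm (exp (- of_real p * z)) \<le> 1" using p_pos by simp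
    then have E': "norm (1 - exp (- of_real p * z)) \<le> 2"
      using norm_triangle_ineq4[of 1 "exp (- of_real p * z)"] by (simp del: norm_exp_eq_Re)
    have f: "norm (f (of_real s * z)) \<le> C * X" if s: "0 < s" "s \<le> 1" for s
    proof -
      have "\<bar>Arg (of_real s * z)\<bar> \<le> e" using z s by simp
      then have "norm (f (of_real s * z)) \<le> C * (1 + norm (of_real s * z)) powr \<gamma>"
        using inner unfolding JS_inner_def by blast
      also have "\<dots> \<le> C * X"
        unfolding X_def using s C \<open>0 \<le> \<gamma>\<close>
        by (intro mult_left_mono powr_mono2) (auto simp: norm_mult intro: mult_left_le_one_le)
      finally show ?thesis .
    qed
    have "norm (g z) \<le> C * X + 2 * (C * X) + 1 * (C * X)"
      using f[of 1] f[of p] f[of q] E E' p_pos p_le_q q_pos q_less_1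
      by (intro order.trans[OF norm_inhomogeneity_le] add_mono mult_mono) auto
    then show ?thesis by (simp add: X_def)
  qed
  then show ?thesis using C by (simp add: JS_inner_def)
qed

lemma JS_outer_inhomogeneity:
  assumes outer: "JS_outer f e d C" and "0 \<le> d"
  shows "JS_outer g e (d * p) (4 * C)"
proof -
  have C: "0 \<le> C" using outer by (simp add: JS_outer_def)
  have "norm (exp z * g z) \<le> 4 * C * exp ((1 - d * p) * norm z)" if z: "e \<le> \<bar>Arg z\<bar>" for z
  proof -
    define x where "x = norm z"
    have F: "norm (exp (of_real s * z) * f (of_real s * z)) \<le> C * exp ((1 - d) * s * x)"
      if "0 < s" for s
    proof -
      have "e \<le> \<bar>Arg (of_real s * z)\<bar>" using z that by simp
      then have "norm (exp (of_real s * z) * f (of_real s * z))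
          \<le> C * exp ((1 - d) * norm (of_real s * z))"
        using outer unfolding JS_outer_def by blast
      then show ?thesis using that by (simp add: norm_mult x_def mult.assoc)
    qed
    have Fz: "norm (exp z * f z) \<le> C * exp ((1 - d) * x)"
      using F[of 1] by simp
    have coef: "norm (exp (of_real q * z) - exp (of_real (q - p) * z)) \<le> 2 * exp (q * x)"
      using p_pos p_le_q complex_Re_le_cmod[of z] by (intro norm_exp_diff_le) (auto simp: x_def)
    have "norm (exp z * g z)
        \<le> C * exp ((1 - d) * x) + 2 * exp (q * x) * (C * exp ((1 - d) * p * x))
          + C * exp ((1 - d) * q * x)"
      using Fz F[of p] F[of q] coef p_pos q_pos
      by (intro order.trans[OF norm_exp_mult_inhomogeneity_le] add_mono mult_mono) auto
    also have "\<dots> \<le> 4 * C * exp ((1 - d * p) * x)"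
    proof -
      have x: "0 \<le> x" by (simp add: x_def)
      note rates = decay_rates_inhomogeneity[OF \<open>0 \<le> d\<close>]
      have "C * exp ((1 - d) * x) \<le> C * exp ((1 - d * p) * x)"
        "C * exp ((1 - d) * q * x) \<le> C * exp ((1 - d * p) * x)"
        using C mult_right_mono[OF rates(1) x] mult_right_mono[OF rates(2) x]
        by (auto intro: mult_left_mono)
      moreover have "q * x + (1 - d) * p * x = (1 - d * p) * x" by (metis rates(3) distrib_right)
      then have "2 * exp (q * x) * (C * exp ((1 - d) * p * x)) = 2 * C * exp ((1 - d * p) * x)"
        by (simp add: mult_ac flip: exp_add)
      ultimately show ?thesis by linarith
    qed
    finally show ?thesis by (simp add: x_def)
  qed
  then show ?thesis using C by (simp add: JS_outer_def)
qed

lemma polynomial_bound_step: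
  assumes z: "\<bar>Arg z\<bar> \<le> e" "e \<le> pi" and large: "1 \<le> norm z" "ln 4 \<le> p * cos e * norm z"
    and n: "((1 + q) / 2) ^ n \<le> 1 / 4"
    and fp: "norm (f (of_real p * z)) \<le> K * (1 + norm (of_real p * z)) ^ n"
    and fq: "norm (f (of_real q * z)) \<le> K * (1 + norm (of_real q * z)) ^ n"
    and g: "norm (g z) \<le> D * (1 + norm z) ^ n" and D: "0 \<le> D" "2 * D \<le> K"
  shows "norm (f z) \<le> K * (1 + norm z) ^ n"
proof -
  define x X where "x = norm z" and "X = (1 + x) ^ n"
  have K: "0 \<le> K" and X: "0 \<le> X" using D by (auto simp: X_def x_def)
  have "p * (norm z * cos e) \<le> p * Re z"
    using norm_mult_cos_le_Re[OF z] p_pos by (intro mult_left_mono) auto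
  with large(2) have "ln 4 \<le> p * Re z" by (simp add: mult_ac)
  then have "exp (- (p * Re z)) \<le> exp (- ln 4)" by simp
  also have "exp (- ln 4) = (1 / 4 :: real)" by (simp add: exp_minus inverse_eq_divide)
  finally have E: "norm (exp (- of_real p * z)) \<le> 1 / 4" by simp
  then have E': "norm (1 - exp (- of_real p * z)) \<le> 5 / 4"
    using norm_triangle_ineq4[of 1 "exp (- of_real p * z)"] by (simp del: norm_exp_eq_Re)
  have "(1 + q * x) ^ n \<le> ((1 + q) / 2) ^ n * X"
    using power_one_plus_mult_le q_pos q_less_1 large by (simp add: X_def x_def)
  also have "\<dots> \<le> 1 / 4 * X" by (rule mult_right_mono[OF n X])
  finally have q_decay: "(1 + q * x) ^ n \<le> X / 4" by simp
  have "(1 + p * x) ^ n \<le> (1 + q * x) ^ n"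
    using p_pos p_le_q by (intro power_mono) (auto simp: x_def mult_right_mono)
  with q_decay have p_decay: "(1 + p * x) ^ n \<le> X / 4" by linarith
  have "norm (f (of_real p * z)) \<le> K * (1 + p * x) ^ n" "norm (f (of_real q * z)) \<le> K * (1 + q * x) ^ n"
    using fp fq p_pos q_pos by (simp_all add: norm_mult x_def)
  then have "norm (f (of_real p * z)) \<le> K * (X / 4)" "norm (f (of_real q * z)) \<le> K * (X / 4)"
    using mult_left_mono[OF p_decay K] mult_left_mono[OF q_decay K] by linarith+
  moreover have "norm (g z) \<le> D * X" using g by (simp add: X_def x_def)
  ultimately have "norm (1 - exp (- of_real p * z)) * norm (f (of_real p * z))
      + norm (exp (- of_real p * z)) * norm (f (of_real q * z)) + norm (g z)
      \<le> 5 / 4 * (K * (X / 4)) + 1 / 4 * (K * (X / 4)) + D * X"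
    using E E' by (intro add_mono mult_mono) auto
  with norm_solution_le[of z]
  have "norm (f z) \<le> 5 / 4 * (K * (X / 4)) + 1 / 4 * (K * (X / 4)) + D * X" by (rule order.trans)
  moreover have "2 * D * X \<le> K * X" "0 \<le> K * X" using D K X by (auto intro: mult_right_mono)
  ultimately show ?thesis by (simp add: X_def x_def)
qed

lemma JS_inner_solution:
  assumes f: "continuous_on UNIV f" and e: "0 \<le> e" "e < pi / 2" and "0 \<le> \<gamma>"
    and inner: "JS_inner g e \<gamma> D"
  obtains n C where "JS_inner f e (real n) C"
proof -
  obtain n where n: "((1 + q) / 2) ^ n \<le> 1 / 4" "\<gamma> \<le> real n"
    by (rule power_le_with_large_exponent[of "(1 + q) / 2" "1 / 4" \<gamma>]) (use q_pos q_less_1 in auto)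
  have c: "0 < cos e" using e by (intro cos_gt_zero_pi) auto
  define R where "R = max 1 (ln 4 / (p * cos e))"
  obtain B where B: "0 \<le> B" "\<And>z. norm z \<le> R \<Longrightarrow> norm (f z) \<le> B"
    using continuous_on_cball_bounded[of R f] continuous_on_subset f by blast
  have D: "0 \<le> D" using inner by (simp add: JS_inner_def)
  define K where "K = 2 * D + B"
  have "norm (f z) \<le> K * (1 + norm z) ^ n" if "z \<in> {z. \<bar>Arg z\<bar> \<le> e}" for z
  proof (rule dilation_induct[OF that p_pos p_le_q q_less_1])
    show "0 < R" by (simp add: R_def)
  next
    fix w assume w: "w \<in> {z. \<bar>Arg z\<bar> \<le> e}" "norm w \<le> R"
    have "norm (f w) \<le> K" using B w D by (force simp: K_def)
    also have "\<dots> \<le> K * (1 + norm w) ^ n" using B D by (simp add: K_def mult_le_cancel_left1)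
    finally show "norm (f w) \<le> K * (1 + norm w) ^ n" .
  next
    fix w assume w: "w \<in> {z. \<bar>Arg z\<bar> \<le> e}" "R < norm w"
      and IH: "norm (f (of_real p * w)) \<le> K * (1 + norm (of_real p * w)) ^ n"
        "norm (f (of_real q * w)) \<le> K * (1 + norm (of_real q * w)) ^ n"
    have "norm (g w) \<le> D * (1 + norm w) powr \<gamma>" using inner w by (simp add: JS_inner_def)
    also have "\<dots> \<le> D * (1 + norm w) powr real n" using D n by (intro mult_left_mono powr_mono) auto
    also have "\<dots> = D * (1 + norm w) ^ n" by (simp add: powr_realpow add_pos_nonneg)
    finally have g: "norm (g w) \<le> D * (1 + norm w) ^ n" .
    have large: "1 \<le> norm w" "ln 4 \<le> p * cos e * norm w"
      using w c p_pos by (auto simp: R_def field_simps)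
    have "\<bar>Arg w\<bar> \<le> e" "e \<le> pi" using w e by auto
    from polynomial_bound_step[OF this large n(1) IH g D] show "norm (f w) \<le> K * (1 + norm w) ^ n"
      using B(1) by (simp add: K_def)
  qed (use p_pos q_pos in simp)
  then show ?thesis
    using B D by (intro that[of n K]) (simp add: JS_inner_def K_def powr_realpow add_pos_nonneg)
qed

lemma exponential_bound_step:
  assumes z: "e \<le> \<bar>Arg z\<bar>" "0 \<le> e" "0 \<le> cos e" and \<delta>: "\<delta> \<le> (1 - cos e) / 2"
    and large: "ln 6 \<le> p * (1 - cos e) / 2 * norm z"
    and Fp: "norm (exp (of_real p * z) * f (of_real p * z)) \<le> K * exp ((1 - \<delta>) * norm (of_real p * z))"
    and Fq: "norm (exp (of_real q * z) * f (of_real q * z)) \<le> K * exp ((1 - \<delta>) * norm (of_real q * z))"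
    and G: "norm (exp z * g z) \<le> Cg * exp ((1 - \<delta>) * norm z)" and Cg: "0 \<le> Cg" "2 * Cg \<le> K"
  shows "norm (exp z * f z) \<le> K * exp ((1 - \<delta>) * norm z)"
proof -
  define c x \<kappa> where "c = cos e" and "x = norm z" and "\<kappa> = p * (1 - c) / 2"
  define W where "W = exp ((1 - \<delta>) * x)"
  have x: "0 \<le> x" and K: "0 \<le> K" using Cg by (auto simp: x_def)
  have coef: "norm (exp (of_real q * z) - exp (of_real (q - p) * z)) \<le> 2 * exp (q * (c * x))"
    using p_pos p_le_q Re_le_norm_mult_cos[OF z(1,2)] x z(3)
    by (intro norm_exp_diff_le) (auto simp: c_def x_def mult.commute)
  have "q * c + (1 - \<delta>) * p \<le> 1 - \<delta> - \<kappa>" "(1 - \<delta>) * q \<le> 1 - \<delta> - \<kappa>"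
    using decay_rates_solution[OF z(3) cos_le_one \<delta>] by (simp_all add: c_def \<kappa>_def)
  then have "(q * c + (1 - \<delta>) * p) * x \<le> (1 - \<delta> - \<kappa>) * x" "((1 - \<delta>) * q) * x \<le> (1 - \<delta> - \<kappa>) * x"
    using x by (auto intro: mult_right_mono)
  then have "exp (q * (c * x)) * exp ((1 - \<delta>) * (p * x)) \<le> exp (- \<kappa> * x) * W"
    "exp ((1 - \<delta>) * (q * x)) \<le> exp (- \<kappa> * x) * W"
    by (simp_all add: W_def algebra_simps flip: exp_add)
  moreover have "exp (- \<kappa> * x) \<le> exp (- ln 6)" using large by (simp add: \<kappa>_def c_def x_def)
  then have "exp (- \<kappa> * x) * W \<le> 1 / 6 * W"
    by (intro mult_right_mono) (simp_all add: W_def exp_minus inverse_eq_divide)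
  ultimately have decay: "exp (q * (c * x)) * exp ((1 - \<delta>) * (p * x)) \<le> W / 6"
    "exp ((1 - \<delta>) * (q * x)) \<le> W / 6"
    by linarith+
  have "norm (exp (of_real q * z) - exp (of_real (q - p) * z)) * norm (exp (of_real p * z) * f (of_real p * z))
      \<le> 2 * exp (q * (c * x)) * (K * exp ((1 - \<delta>) * (p * x)))"
    using coef Fp p_pos by (intro mult_mono) (auto simp: x_def norm_mult)
  also have "\<dots> \<le> K * W / 3" using mult_left_mono[OF decay(1) K] by (simp add: field_simps)
  finally have "norm (exp (of_real q * z) - exp (of_real (q - p) * z))
      * norm (exp (of_real p * z) * f (of_real p * z)) \<le> K * W / 3" .
  moreover have "norm (exp (of_real q * z) * f (of_real q * z)) \<le> K * W / 6"
    using Fq q_pos mult_left_mono[OF decay(2) K] by (simp add: x_def norm_mult field_simps)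
  moreover have "norm (exp z * g z) \<le> Cg * W" using G by (simp add: W_def x_def)
  moreover have "2 * Cg * W \<le> K * W" using Cg by (simp add: W_def)
  ultimately show ?thesis using norm_exp_mult_solution_le[of z] unfolding W_def x_def by linarith
qed

lemma JS_outer_solution:
  assumes f: "continuous_on UNIV f" and e: "0 < e" "e \<le> pi / 2" and "0 < d"
    and outer: "JS_outer g e d Cg"
  obtains \<delta> C where "0 < \<delta>" "\<delta> < 1" "JS_outer f e \<delta> C"
proof -
  have "cos e < cos 0" using e by (intro cos_monotone_0_pi) auto
  moreover have "0 \<le> cos e" using e by (intro cos_ge_zero) auto
  ultimately have c: "0 \<le> cos e" "cos e < 1" by simp_all
  define \<delta> where "\<delta> = min d ((1 - cos e) / 2)"
  have \<delta>: "0 < \<delta>" "\<delta> \<le> d" "\<delta> \<le> (1 - cos e) / 2" "\<delta> < 1"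
    using c \<open>0 < d\<close> by (auto simp: \<delta>_def min_def)
  define \<kappa> where "\<kappa> = p * (1 - cos e) / 2"
  have "0 < \<kappa>" using p_pos c by (simp add: \<kappa>_def)
  define R where "R = max 1 (ln 6 / \<kappa>)"
  have "continuous_on (cball 0 R) (\<lambda>z. exp z * f z)"
    by (intro continuous_intros continuous_on_subset[OF f]) auto
  then obtain B where B: "0 \<le> B" "\<And>z. norm z \<le> R \<Longrightarrow> norm (exp z * f z) \<le> B"
    using continuous_on_cball_bounded by blast
  have Cg: "0 \<le> Cg" using outer by (simp add: JS_outer_def)
  define K where "K = 2 * Cg + B"
  have "norm (exp z * f z) \<le> K * exp ((1 - \<delta>) * norm z)" if "z \<in> {z. e \<le> \<bar>Arg z\<bar>}" for z
  proof (rule dilation_induct[OF that p_pos p_le_q q_less_1])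
    show "0 < R" by (simp add: R_def)
  next
    fix w assume w: "w \<in> {z. e \<le> \<bar>Arg z\<bar>}" "norm w \<le> R"
    have "norm (exp w * f w) \<le> K" using B w Cg by (force simp: K_def)
    also have "\<dots> \<le> K * exp ((1 - \<delta>) * norm w)" using B Cg \<delta> by (simp add: K_def mult_le_cancel_left1)
    finally show "norm (exp w * f w) \<le> K * exp ((1 - \<delta>) * norm w)" .
  next
    fix w assume w: "w \<in> {z. e \<le> \<bar>Arg z\<bar>}" "R < norm w"
      and IH: "norm (exp (of_real p * w) * f (of_real p * w)) \<le> K * exp ((1 - \<delta>) * norm (of_real p * w))"
        "norm (exp (of_real q * w) * f (of_real q * w)) \<le> K * exp ((1 - \<delta>) * norm (of_real q * w))"
    have large: "ln 6 \<le> p * (1 - cos e) / 2 * norm w"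
      using w \<open>0 < \<kappa>\<close> by (auto simp: R_def \<kappa>_def field_simps)
    have "norm (exp w * g w) \<le> Cg * exp ((1 - d) * norm w)" using outer w by (simp add: JS_outer_def)
    also have "\<dots> \<le> Cg * exp ((1 - \<delta>) * norm w)"
      using Cg \<delta> by (intro mult_left_mono) (auto intro: mult_right_mono)
    finally have G: "norm (exp w * g w) \<le> Cg * exp ((1 - \<delta>) * norm w)" .
    have "e \<le> \<bar>Arg w\<bar>" "0 \<le> e" using w e by auto
    from exponential_bound_step[OF this c(1) \<delta>(3) large IH G Cg]
    show "norm (exp w * f w) \<le> K * exp ((1 - \<delta>) * norm w)" using B(1) by (simp add: K_def)
  qed (use p_pos q_pos in simp)
  then show ?thesis using \<delta> B Cg by (intro that[of \<delta> K]) (auto simp: JS_outer_def K_def)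
qed

end

theorem mainTheorem10:
  fixes p q :: real and f g :: "complex \<Rightarrow> complex"
  assumes "0 < p" and "q = 1 - p" and "p \<le> q"
    and "f holomorphic_on UNIV" and "g holomorphic_on UNIV"
    and "\<And>z. f z = (1 - exp (- of_real p * z)) * f (of_real p * z)
                 + exp (- of_real p * z) * f (of_real q * z) + g z"
    and "f 0 = 0" and "g 0 = 0"
  shows "JS_admissible f \<longleftrightarrow> JS_admissible g"
proof -
  interpret dilation_equation p q f g using assms(1-3,6) by unfold_locales
  have f: "continuous_on UNIV f" using assms(4) holomorphic_on_imp_continuous_on by blast
  have "1 < pi / 2" using pi_gt3 by linarith
  show ?thesis
  proof
    assume "JS_admissible f"
    then obtain e d \<gamma> C C' where e: "0 < e" "e \<le> 1" and d: "0 < d" "d < 1" and \<gamma>: "0 \<le> \<gamma>"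
      and inner: "JS_inner f e \<gamma> C" and outer: "JS_outer f e d C'" by (rule JS_admissibleE)
    have "d * p < 1 * 1" using d p_pos p_le_q q_less_1 by (intro mult_strict_mono) auto
    moreover have "JS_inner g e \<gamma> (4 * C)"
      using JS_inner_inhomogeneity[OF inner \<gamma>] e \<open>1 < pi / 2\<close> by simp
    moreover have "JS_outer g e (d * p) (4 * C')" using JS_outer_inhomogeneity[OF outer] d by simp
    ultimately show "JS_admissible g"
      using JS_admissibleI[OF assms(5) e(1) _ _ \<gamma>, where d = "d * p"] d p_pos by simp
  next
    assume "JS_admissible g"
    then obtain e d \<gamma> D Cg where e: "0 < e" "e \<le> 1" and d: "0 < d" and \<gamma>: "0 \<le> \<gamma>"
      and inner: "JS_inner g e \<gamma> D" and outer: "JS_outer g e d Cg" by (rule JS_admissibleE)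
    have e': "0 \<le> e" "e < pi / 2" "e \<le> pi / 2" using e \<open>1 < pi / 2\<close> by auto
    obtain n C where inner_f: "JS_inner f e (real n) C" using JS_inner_solution[OF f e'(1,2) \<gamma> inner] .
    obtain \<delta> C' where \<delta>: "0 < \<delta>" "\<delta> < 1" and outer_f: "JS_outer f e \<delta> C'"
      using JS_outer_solution[OF f e(1) e'(3) d outer] .
    show "JS_admissible f" using JS_admissibleI[OF assms(4) e(1) \<delta> of_nat_0_le_iff inner_f outer_f] .
  qed
qed

end
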